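(* Let $\mathcal A$ be a finite alphabet, and for each $n\ge 0$ let $\sigma_n:\mathcal A^*\to\mathcal A^*$ be a monoid morphism whose incidence matrix $M(\sigma_n)$ is invertible. Suppose the directive sequence $(\sigma_n)_{n\ge0}$ is everywhere growing, and let $X$ be the subshift it generates. Then every invariant measure $\mu$ on $X$ is determined by the values $\mu([a])$, $a\in\mathcal A$; i.e. two invariant measures on $X$ which agree on all letter cylinders $[a]$, $a\in\mathcal A$, are equal.
   Context: For a finite alphabet $\mathcal A$, $\mathcal A^{\mathbb Z}$ carries the product topology and the shift map $T$. A subshift is a closed $T$-invariant ($T(X)=X$) subset. An invariant measure on $X$ is a finite $T$-invariant Borel measure on $\mathcal A^{\mathbb Z}$ with support in $X$. For $w=y_1\cdots y_n\in\mathcal A^*$, the cylinder $[w]$ is $\{x\in\mathcal A^{\mathbb Z}: x_i=y_i,\ i=1,\dots,n\}$. For a monoid morphism $\sigma:\mathcal A^*\to\mathcal A'^*$ the incidence matrix is $M(\sigma)=(|\sigma(a_j)|_{a'_i})_{i,j}$, where $|w|_x$ is the number of occurrences of the letter $x$ in $w$. The subshift generated by the directive sequence $(\sigma_n)_{n\ge0}$ consists of all $x\in\mathcal A^{\mathbb Z}$ such that every finite factor of $x$ is a factor of $\sigma_0\circ\cdots\circ\sigma_{n-1}(a)$ for some $n\ge0$ and $a\in\mathcal A$. The sequence is everywhere growing if $\min_{a\in\mathcal A}|\sigma_0\circ\cdots\circ\sigma_{n-1}(a)|\to\infty$ as $n\to\infty$. *)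

theory Defs
  imports "HOL-Analysis.Analysis" "HOL-Library.Sublist"
begin

definition shift :: "(int \<Rightarrow> 'a) \<Rightarrow> (int \<Rightarrow> 'a)" where
  "shift x = (\<lambda>i. x (i + 1))"

definition fullshift_top :: "(int \<Rightarrow> 'a) topology" where
  "fullshift_top = product_topology (\<lambda>_. discrete_topology UNIV) UNIV"

definition fullshift_borel :: "(int \<Rightarrow> 'a) measure" where
  "fullshift_borel = sigma (topspace fullshift_top) {S. openin fullshift_top S}"

definition cylinder :: "'a list \<Rightarrow> (int \<Rightarrow> 'a) set" where
  "cylinder w = {x. \<forall>i < length w. x (int i + 1) = w ! i}"

definition morph :: "('a \<Rightarrow> 'b list) \<Rightarrow> 'a list \<Rightarrow> 'b list" where
  "morph s w = concat (map s w)"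

text \<open>comp_dir sig n = sigma_0 o ... o sigma_(n-1) (as a map on words).\<close>
fun comp_dir :: "(nat \<Rightarrow> 'a \<Rightarrow> 'a list) \<Rightarrow> nat \<Rightarrow> 'a list \<Rightarrow> 'a list" where
  "comp_dir sig 0 w = w"
| "comp_dir sig (Suc n) w = comp_dir sig n (morph (sig n) w)"

definition incidence :: "('a::finite \<Rightarrow> 'a list) \<Rightarrow> real^'a^'a" where
  "incidence s = (\<chi> i j. real (count_list (s j) i))"

definition everywhere_growing :: "(nat \<Rightarrow> 'a::finite \<Rightarrow> 'a list) \<Rightarrow> bool" where
  "everywhere_growing sig \<longleftrightarrow>
     filterlim (\<lambda>n. Min (range (\<lambda>a. length (comp_dir sig n [a])))) at_top sequentially"

definition factor_at :: "(int \<Rightarrow> 'a) \<Rightarrow> int \<Rightarrow> nat \<Rightarrow> 'a list" where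
  "factor_at x i k = map (\<lambda>j. x (i + int j)) [0..<k]"

definition generated_subshift :: "(nat \<Rightarrow> 'a \<Rightarrow> 'a list) \<Rightarrow> (int \<Rightarrow> 'a) set" where
  "generated_subshift sig =
     {x. \<forall>i k. \<exists>n a. sublist (factor_at x i k) (comp_dir sig n [a])}"

definition invariant_measure_on :: "(int \<Rightarrow> 'a) set \<Rightarrow> (int \<Rightarrow> 'a) measure \<Rightarrow> bool" where
  "invariant_measure_on X M \<longleftrightarrow>
     sets M = sets fullshift_borel \<and> finite_measure M \<and>
     (\<forall>A \<in> sets M. emeasure M (shift -` A \<inter> space M) = emeasure M A) \<and>
     emeasure M (space M - X) = 0"

end

theory Submission
  imports Defs
begin

text \<open>
  Write \<open>P u = \<mu>([u])\<close>. Fix \<open>n\<close> and let \<open>\<tau> = \<sigma>\<^sub>0 \<circ> \<dots> \<circ> \<sigma>\<^sub>n\<^sub>-\<^sub>1\<close>. A long word \<open>u\<close> of the language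
  is \<open>\<tau>(v)\<close> up to a bounded prefix and suffix, so the letter counts of \<open>u\<close> are \<open>M(\<tau>) k\<^sub>u + O(1)\<close>,
  where \<open>k\<^sub>u\<close> is the Parikh vector of \<open>v\<close>, and \<open>|u|\<^sub>w\<close> lies between \<open>\<Sum>\<^sub>b k\<^sub>u(b) |\<tau>(b)|\<^sub>w\<close> and this sum
  plus \<open>O(|w| |u| / min\<^sub>b |\<tau>(b)|)\<close>. For two invariant measures agreeing on letters, the letter counts
  average to the same values over windows of length \<open>m\<close>, so the vector
  \<open>D = \<Sum>\<^sub>u (P u - Q u) k\<^sub>u\<close> has \<open>M(\<tau>) D = O(1)\<close> and hence, \<open>M(\<tau>)\<close> being invertible, \<open>D = O(1)\<close>
  uniformly in \<open>m\<close>. Averaging \<open>|u|\<^sub>w\<close> over the windows then gives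
  \<open>(m - |w| + 1) (P w - Q w) \<le> O(1) + T |w| m / min\<^sub>b |\<tau>(b)|\<close>; letting \<open>m \<rightarrow> \<infinity>\<close> and then
  \<open>n \<rightarrow> \<infinity>\<close> shows \<open>P = Q\<close>. Cylinders generate the Borel sets, so the measures coincide.
\<close>

text \<open>\<open>occ w u\<close> is the number \<open>|u|\<^sub>w\<close> of (possibly overlapping) occurrences of \<open>w\<close> in \<open>u\<close>;
  note that \<open>occ [] u = length u\<close>.\<close>
fun occ :: "'a list \<Rightarrow> 'a list \<Rightarrow> nat" where
  "occ w [] = 0"
| "occ w (x # xs) = (if prefix w (x # xs) then 1 else 0) + occ w xs"

lemma occ_conv_sum: "occ w u = (\<Sum>i<length u. if prefix w (drop i u) then 1 else 0)"
  by (induction u) (simp_all add: sum.lessThan_Suc_shift del: sum.lessThan_Suc)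

lemma occ_singleton: "occ [a] u = count_list u a"
  by (induction u) auto

lemma occ_le_length: "occ w u \<le> length u"
  by (induction u) auto

lemma occ_append_ge: "occ w x + occ w y \<le> occ w (x @ y)"
proof (induction x)
  case (Cons a x)
  have "prefix w (a # x) \<Longrightarrow> prefix w (a # x @ y)"
    by (metis append_Cons prefix_prefix)
  with Cons show ?case by auto
qed simp

lemma occ_append_le: "occ w (x @ y) \<le> occ w x + occ w y + min (length x) (length w)"
proof (induction x)
  case (Cons a x)
  have long: "prefix w (a # x) \<Longrightarrow> prefix w (a # x @ y)"
    by (metis append_Cons prefix_prefix)
  have short: "length (a # x) < length w"
    if pre: "prefix w (a # x @ y)" and not_pre: "\<not> prefix w (a # x)"
  proof -
    from pre have "prefix w ((a # x) @ y)" by simp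
    then have "prefix w (a # x) \<or> (\<exists>us. w = (a # x) @ us \<and> prefix us y)"
      by (simp only: prefix_append)
    then obtain us where us: "w = (a # x) @ us"
      using not_pre by blast
    with not_pre have "us \<noteq> []" by auto
    with us show ?thesis by simp
  qed
  have "min (length x) (length w) + (if prefix w (a # x @ y) then 1 else 0)
      \<le> (if prefix w (a # x) then 1 else 0) + min (length (a # x)) (length w)"
    using long short by (auto simp del: prefix_Cons)
  then show ?case
    using Cons.IH by simp
qed simp

lemma occ_concat_ge: "sum_list (map (occ w) xs) \<le> occ w (concat xs)"
proof (induction xs)
  case (Cons x xs)
  then show ?case using occ_append_ge[of w x "concat xs"] by simp
qed simp

lemma occ_concat_le: "occ w (concat xs) \<le> sum_list (map (occ w) xs) + length w * length xs"
proof (induction xs)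
  case (Cons x xs)
  then show ?case using occ_append_le[of w x "concat xs"] by simp
qed simp

lemma count_list_concat_map:
  fixes \<tau> :: "'b::finite \<Rightarrow> 'a list"
  shows "count_list (concat (map \<tau> v)) a = (\<Sum>b\<in>UNIV. count_list v b * count_list (\<tau> b) a)"
  by (simp add: count_list_concat sum_list_map_eq_sum_count2[of v UNIV])

lemma length_le_div_length_concat_map:
  assumes "0 < L" "\<And>b. L \<le> length (\<tau> b)"
  shows "real (length v) \<le> length (s @ concat (map \<tau> v) @ p) / L"
proof -
  from assms(2) have "length v * L \<le> length (concat (map \<tau> v))"
    by (induction v) (auto simp: add_mono)
  then show ?thesis
    using assms(1) by (simp add: pos_le_divide_eq flip: of_nat_mult)
qed

lemma occ_concat_map_ge:
  fixes \<tau> :: "'b::finite \<Rightarrow> 'a list"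
  shows "(\<Sum>b\<in>UNIV. count_list v b * occ w (\<tau> b)) \<le> occ w (s @ concat (map \<tau> v) @ p)"
proof -
  have "(\<Sum>b\<in>UNIV. count_list v b * occ w (\<tau> b)) \<le> occ w (concat (map \<tau> v))"
    using occ_concat_ge[of w "map \<tau> v"] by (simp add: sum_list_map_eq_sum_count2[of v UNIV] o_def)
  also have "\<dots> \<le> occ w (s @ concat (map \<tau> v) @ p)"
    using occ_append_ge[of w s "concat (map \<tau> v) @ p"] occ_append_ge[of w "concat (map \<tau> v)" p]
    by linarith
  finally show ?thesis .
qed

lemma occ_concat_map_le:
  fixes \<tau> :: "'b::finite \<Rightarrow> 'a list"
  shows "occ w (s @ concat (map \<tau> v) @ p)
    \<le> (\<Sum>b\<in>UNIV. count_list v b * occ w (\<tau> b)) + length w * length v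
       + length s + length p + 2 * length w"
proof -
  have "occ w (concat (map \<tau> v)) \<le> (\<Sum>b\<in>UNIV. count_list v b * occ w (\<tau> b)) + length w * length v"
    using occ_concat_le[of w "map \<tau> v"] by (simp add: sum_list_map_eq_sum_count2[of v UNIV] o_def)
  moreover have "occ w s \<le> length s" "occ w p \<le> length p"
    by (rule occ_le_length)+
  ultimately show ?thesis
    using occ_append_le[of w s "concat (map \<tau> v) @ p"] occ_append_le[of w "concat (map \<tau> v)" p]
    by linarith
qed

lemma morph_append: "morph s (x @ y) = morph s x @ morph s y"
  by (simp add: morph_def)

lemma comp_dir_append: "comp_dir sig n (x @ y) = comp_dir sig n x @ comp_dir sig n y"
  by (induction n arbitrary: x y) (simp_all add: morph_append)

lemma comp_dir_conv_concat: "comp_dir sig n v = concat (map (\<lambda>b. comp_dir sig n [b]) v)"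
proof (induction v)
  case Nil
  show ?case by (induction n) (simp_all add: morph_def)
next
  case (Cons b v)
  then show ?case using comp_dir_append[of sig n "[b]" v] by simp
qed

lemma comp_dir_factor: "n \<le> N \<Longrightarrow> \<exists>v. comp_dir sig N w = comp_dir sig n v"
proof (induction N arbitrary: w)
  case (Suc N)
  then show ?case by (cases "n = Suc N") auto
qed auto

lemma incidence_comp_dir_Suc:
  fixes sig :: "nat \<Rightarrow> 'a::finite \<Rightarrow> 'a list"
  shows "incidence (\<lambda>b. comp_dir sig (Suc n) [b])
    = incidence (\<lambda>b. comp_dir sig n [b]) ** incidence (sig n)"
proof -
  have "real (count_list (comp_dir sig (Suc n) [j]) i)
      = (\<Sum>c\<in>UNIV. real (count_list (comp_dir sig n [c]) i) * real (count_list (sig n j) c))" for i j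
  proof -
    have "comp_dir sig (Suc n) [j] = concat (map (\<lambda>b. comp_dir sig n [b]) (sig n j))"
      using comp_dir_conv_concat[of sig n "sig n j"] by (simp add: morph_def)
    then show ?thesis
      by (simp add: count_list_concat_map of_nat_sum mult.commute)
  qed
  then show ?thesis
    by (simp add: incidence_def matrix_matrix_mult_def vec_eq_iff)
qed

lemma invertible_incidence_comp_dir:
  fixes sig :: "nat \<Rightarrow> 'a::finite \<Rightarrow> 'a list"
  assumes "\<And>n. invertible (incidence (sig n))"
  shows "invertible (incidence (\<lambda>b. comp_dir sig n [b]))"
proof (induction n)
  case 0
  have "incidence (\<lambda>b. comp_dir sig 0 [b]) = (mat 1 :: real^'a^'a)"
    by (simp add: incidence_def mat_def vec_eq_iff)
  then show ?case by (simp add: invertible_def)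
next
  case (Suc n)
  then show ?case using incidence_comp_dir_Suc invertible_mult assms by metis
qed

definition dir_language :: "(nat \<Rightarrow> 'a \<Rightarrow> 'a list) \<Rightarrow> 'a list set" where
  "dir_language sig = {u. \<exists>n a. sublist u (comp_dir sig n [a])}"

lemma prefix_concat_map_decomp:
  assumes "\<And>b. length (\<tau> b) \<le> L" "prefix q (concat (map \<tau> v))"
  shows "\<exists>v' p. q = concat (map \<tau> v') @ p \<and> length p \<le> L"
  using assms(2)
proof (induction v arbitrary: q)
  case Nil
  then show ?case by (intro exI[of _ "[]"] exI[of _ q]) auto
next
  case (Cons b v)
  from Cons.prems consider "prefix q (\<tau> b)" | us where "q = \<tau> b @ us" "prefix us (concat (map \<tau> v))"
    by (auto simp: prefix_append)
  then show ?case
  proof cases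
    case 1
    then have "length q \<le> L" using assms(1)[of b] prefix_length_le le_trans by blast
    then show ?thesis by (intro exI[of _ "[]"] exI[of _ q]) auto
  next
    case 2
    with Cons.IH obtain v' p where "q = \<tau> b @ concat (map \<tau> v') @ p" "length p \<le> L" by blast
    then show ?thesis by (intro exI[of _ "b # v'"] exI[of _ p]) auto
  qed
qed

lemma sublist_concat_map_decomp:
  assumes "\<And>b. length (\<tau> b) \<le> L" "sublist u (concat (map \<tau> v))"
  shows "\<exists>s v' p. u = s @ concat (map \<tau> v') @ p \<and> length s \<le> L \<and> length p \<le> L"
  using assms(2)
proof (induction v)
  case Nil
  then show ?case by (intro exI[of _ "[]"] exI[of _ "[]"] exI[of _ "[]"]) auto
next
  case (Cons b v)
  from Cons.prems consider "sublist u (\<tau> b)" | "sublist u (concat (map \<tau> v))"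
    | xs ys where "u = xs @ ys" "suffix xs (\<tau> b)" "prefix ys (concat (map \<tau> v))"
    by (auto simp: sublist_append)
  then show ?case
  proof cases
    case 1
    then have "length u \<le> L" using assms(1)[of b] sublist_length_le le_trans by blast
    then show ?thesis by (intro exI[of _ u] exI[of _ "[]"]) auto
  next
    case 2
    then show ?thesis using Cons.IH by blast
  next
    case 3
    have "length xs \<le> L" using 3(2) assms(1)[of b] suffix_length_le le_trans by blast
    moreover obtain v' p where "ys = concat (map \<tau> v') @ p" "length p \<le> L"
      using prefix_concat_map_decomp[OF assms(1) 3(3)] by blast
    ultimately show ?thesis using 3(1) by (intro exI[of _ xs] exI[of _ v'] exI[of _ p]) auto
  qed
qed

lemma dir_language_decomp:
  fixes sig :: "nat \<Rightarrow> 'a::finite \<Rightarrow> 'a list"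
  assumes L: "\<And>b. length (comp_dir sig n [b]) \<le> L"
  obtains K V where "\<And>u. u \<in> dir_language sig \<Longrightarrow> K < length u \<Longrightarrow>
    \<exists>s p. u = s @ concat (map (\<lambda>b. comp_dir sig n [b]) (V u)) @ p \<and> length s + length p \<le> 2 * L"
proof -
  define K where "K = Max ((\<lambda>(N, a). length (comp_dir sig N [a])) ` ({..<n} \<times> UNIV))"
  have "\<exists>v s p. u = s @ concat (map (\<lambda>b. comp_dir sig n [b]) v) @ p \<and> length s + length p \<le> 2 * L"
    if u: "u \<in> dir_language sig" "K < length u" for u
  proof -
    obtain N a where Na: "sublist u (comp_dir sig N [a])"
      using u(1) by (auto simp: dir_language_def)
    have "n \<le> N"
    proof (rule ccontr)
      assume "\<not> n \<le> N"
      then have "length (comp_dir sig N [a]) \<le> K"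
        unfolding K_def by (intro Max_ge) auto
      with Na u(2) show False using sublist_length_le by fastforce
    qed
    then obtain v0 where "comp_dir sig N [a] = comp_dir sig n v0"
      using comp_dir_factor by blast
    with Na have "sublist u (concat (map (\<lambda>b. comp_dir sig n [b]) v0))"
      using comp_dir_conv_concat[of sig n v0] by simp
    from sublist_concat_map_decomp[OF L this] show ?thesis
      by (metis add_mono mult_2)
  qed
  then have "\<forall>u. \<exists>v. u \<in> dir_language sig \<and> K < length u \<longrightarrow>
      (\<exists>s p. u = s @ concat (map (\<lambda>b. comp_dir sig n [b]) v) @ p \<and> length s + length p \<le> 2 * L)"
    by blast
  from choice[OF this] obtain V where "\<forall>u. u \<in> dir_language sig \<and> K < length u \<longrightarrow>
      (\<exists>s p. u = s @ concat (map (\<lambda>b. comp_dir sig n [b]) (V u)) @ p \<and> length s + length p \<le> 2 * L)"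
    by blast
  then show ?thesis
    by (intro that[of K V]) blast
qed

lemma invertible_bounded_preimage:
  fixes A :: "real^'n^'n"
  assumes "invertible A"
  shows "\<exists>B. \<forall>x. (\<forall>a. \<bar>(A *v x) $ a\<bar> \<le> c) \<longrightarrow> (\<forall>b. \<bar>x $ b\<bar> \<le> B)"
proof -
  obtain A' where A': "A' ** A = mat 1" using assms unfolding invertible_def by blast
  have "bounded_linear (\<lambda>y. A' *v y)"
    by (simp add: linear_conv_bounded_linear)
  then obtain K where K: "K > 0" "\<And>y. norm (A' *v y) \<le> norm y * K"
    using bounded_linear.pos_bounded by blast
  show ?thesis
  proof (intro exI allI impI)
    fix x :: "real^'n" and b
    assume h: "\<forall>a. \<bar>(A *v x) $ a\<bar> \<le> c"
    have "\<bar>x $ b\<bar> = \<bar>(A' *v (A *v x)) $ b\<bar>" by (simp add: matrix_vector_mul_assoc A')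
    also have "\<dots> \<le> norm (A' *v (A *v x))" by (rule component_le_norm_cart)
    also have "\<dots> \<le> norm (A *v x) * K" using K by blast
    also have "norm (A *v x) \<le> (\<Sum>i\<in>UNIV. \<bar>(A *v x) $ i\<bar>)" by (rule norm_le_l1_cart)
    also have "\<dots> \<le> (\<Sum>i\<in>(UNIV::'n set). c)" using h by (intro sum_mono) auto
    finally show "\<bar>x $ b\<bar> \<le> real CARD('n) * c * K" using K by (simp add: mult_right_mono)
  qed
qed

lemma le_of_affine_bound:
  fixes x c C l :: real
  assumes "\<And>m. m \<ge> m0 \<Longrightarrow> (real m - l + 1) * x \<le> C + c * real m"
  shows "x \<le> c"
proof (rule ccontr)
  assume "\<not> x \<le> c"
  then have xc: "x - c > 0" by simp
  obtain m1 :: nat where m1: "real m1 > (C + \<bar>l\<bar> * \<bar>x\<bar> + \<bar>x\<bar>) / (x - c)"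
    using reals_Archimedean2 by blast
  define m where "m = max m0 m1"
  have "real m * (x - c) > C + \<bar>l\<bar> * \<bar>x\<bar> + \<bar>x\<bar>"
    using m1 xc by (smt (verit) m_def mult_right_mono of_nat_le_iff max.cobounded2 pos_divide_less_eq)
  moreover have "(real m - l + 1) * x \<le> C + c * real m" using assms by (simp add: m_def)
  moreover have "- \<bar>l\<bar> * \<bar>x\<bar> \<le> - l * x" "- \<bar>x\<bar> \<le> x"
    by (auto simp: abs_mult[symmetric] abs_le_iff)
  ultimately show False by (simp add: algebra_simps)
qed

lemma incidence_parikh_sum_le:
  fixes \<tau> :: "'a::finite \<Rightarrow> 'a list" and \<rho> :: "'a list \<Rightarrow> real"
  assumes "finite G"
    and decomp: "\<And>u. u \<in> G \<Longrightarrow> \<exists>s p. u = s @ concat (map \<tau> (V u)) @ p \<and> length s + length p \<le> e"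
    and balanced: "\<And>a. (\<Sum>u\<in>G. \<rho> u * count_list u a) = 0"
  shows "\<bar>(incidence \<tau> *v (\<chi> b. \<Sum>u\<in>G. \<rho> u * count_list (V u) b)) $ a\<bar> \<le> e * (\<Sum>u\<in>G. \<bar>\<rho> u\<bar>)"
proof -
  let ?c = "\<lambda>u. real (count_list (concat (map \<tau> (V u))) a)"
  have deviation: "\<bar>?c u - count_list u a\<bar> \<le> e" if uG: "u \<in> G" for u
  proof -
    obtain s p where sp: "u = s @ concat (map \<tau> (V u)) @ p" "length s + length p \<le> e"
      using decomp[OF uG] by blast
    have "count_list u a = count_list s a + count_list (concat (map \<tau> (V u))) a + count_list p a"
      using arg_cong[OF sp(1), of "\<lambda>x. count_list x a"] by (simp only: count_list_append add.assoc)
    moreover have "count_list s a \<le> length s" "count_list p a \<le> length p"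
      by (rule count_le_length)+
    ultimately show ?thesis using sp(2) by simp
  qed
  let ?D = "\<chi> b. \<Sum>u\<in>G. \<rho> u * count_list (V u) b"
  have "(incidence \<tau> *v ?D) $ a
      = (\<Sum>b\<in>UNIV. \<Sum>u\<in>G. \<rho> u * (count_list (V u) b * count_list (\<tau> b) a))"
    by (simp add: matrix_vector_mult_def incidence_def sum_distrib_left mult_ac)
  also have "\<dots> = (\<Sum>u\<in>G. \<rho> u * ?c u)"
    by (subst sum.swap) (simp add: count_list_concat_map of_nat_sum sum_distrib_left)
  also have "\<dots> = (\<Sum>u\<in>G. \<rho> u * (?c u - count_list u a))"
    using balanced[of a] by (simp add: right_diff_distrib sum_subtractf)
  finally have entry: "(incidence \<tau> *v ?D) $ a = (\<Sum>u\<in>G. \<rho> u * (?c u - count_list u a))" .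
  have "\<bar>(incidence \<tau> *v ?D) $ a\<bar> \<le> (\<Sum>u\<in>G. \<bar>\<rho> u\<bar> * \<bar>?c u - count_list u a\<bar>)"
    unfolding entry by (rule order_trans[OF sum_abs]) (simp add: abs_mult)
  also have "\<dots> \<le> (\<Sum>u\<in>G. \<bar>\<rho> u\<bar> * e)"
    using deviation by (intro sum_mono mult_left_mono) auto
  finally show ?thesis by (simp add: sum_distrib_left mult.commute)
qed

lemma occ_weighted_difference_le:
  fixes \<tau> :: "'a::finite \<Rightarrow> 'a list" and P Q :: "'a list \<Rightarrow> real" and r :: real
  assumes "finite G"
    and nonneg: "\<And>u. u \<in> G \<Longrightarrow> 0 \<le> P u" "\<And>u. u \<in> G \<Longrightarrow> 0 \<le> Q u"
    and decomp: "\<And>u. u \<in> G \<Longrightarrow> \<exists>s p. u = s @ concat (map \<tau> (V u)) @ p \<and> length s + length p \<le> e"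
    and short: "\<And>u. u \<in> G \<Longrightarrow> real (length (V u)) \<le> r"
  shows "(\<Sum>u\<in>G. (P u - Q u) * occ w u)
    \<le> (\<Sum>b\<in>UNIV. occ w (\<tau> b) * (\<Sum>u\<in>G. (P u - Q u) * count_list (V u) b))
       + (\<Sum>u\<in>G. P u) * (length w * r + e + 2 * length w)"
proof -
  define \<kappa> where "\<kappa> u = real (\<Sum>b\<in>UNIV. count_list (V u) b * occ w (\<tau> b))" for u
  define E where "E = length w * r + e + 2 * length w"
  have lower: "\<kappa> u \<le> occ w u" and upper: "occ w u \<le> \<kappa> u + E" if uG: "u \<in> G" for u
  proof -
    obtain s p where sp: "u = s @ concat (map \<tau> (V u)) @ p" "length s + length p \<le> e"
      using decomp[OF uG] by blast
    from occ_concat_map_ge[where v = "V u" and s = s and p = p and w = w and \<tau> = \<tau>]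
    have "(\<Sum>b\<in>UNIV. count_list (V u) b * occ w (\<tau> b)) \<le> occ w u"
      by (simp only: sp(1)[symmetric])
    then show "\<kappa> u \<le> occ w u"
      unfolding \<kappa>_def of_nat_le_iff .
    from occ_concat_map_le[where v = "V u" and s = s and p = p and w = w and \<tau> = \<tau>] sp(2)
    have "occ w u \<le> (\<Sum>b\<in>UNIV. count_list (V u) b * occ w (\<tau> b)) + length w * length (V u)
        + e + 2 * length w"
      unfolding sp(1)[symmetric] by linarith
    then have "real (occ w u) \<le> \<kappa> u + length w * length (V u) + e + 2 * length w"
      unfolding \<kappa>_def by (metis of_nat_add of_nat_le_iff of_nat_mult of_nat_numeral)
    moreover have "real (length w) * length (V u) \<le> length w * r"
      using short[OF uG] by (simp add: mult_left_mono)
    ultimately show "occ w u \<le> \<kappa> u + E"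
      unfolding E_def of_nat_mult by linarith
  qed
  have "(\<Sum>u\<in>G. (P u - Q u) * occ w u) = (\<Sum>u\<in>G. P u * occ w u) - (\<Sum>u\<in>G. Q u * occ w u)"
    by (simp add: left_diff_distrib sum_subtractf)
  also have "\<dots> \<le> (\<Sum>u\<in>G. P u * (\<kappa> u + E)) - (\<Sum>u\<in>G. Q u * \<kappa> u)"
    using nonneg lower upper by (intro diff_mono sum_mono mult_left_mono) auto
  also have "\<dots> = (\<Sum>u\<in>G. (P u - Q u) * \<kappa> u) + (\<Sum>u\<in>G. P u) * E"
    by (simp add: algebra_simps sum.distrib sum_subtractf sum_distrib_left)
  also have "(\<Sum>u\<in>G. (P u - Q u) * \<kappa> u)
      = (\<Sum>b\<in>UNIV. occ w (\<tau> b) * (\<Sum>u\<in>G. (P u - Q u) * count_list (V u) b))"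
    unfolding \<kappa>_def by (simp add: of_nat_sum sum_distrib_left mult_ac sum.swap[of _ G])
  finally show ?thesis by (simp add: E_def)
qed

text \<open>The statistics \<open>u \<mapsto> \<mu>([u])\<close> of an invariant measure \<open>\<mu>\<close> of total mass \<open>T\<close> on a
  subshift with language \<open>L\<close>. The last clause sums over the windows of length \<open>m\<close>, which see
  \<open>w \<noteq> []\<close> at each of its \<open>m - |w| + 1\<close> possible positions.\<close>
definition word_frequencies :: "'a list set \<Rightarrow> real \<Rightarrow> ('a list \<Rightarrow> real) \<Rightarrow> bool" where
  "word_frequencies L T P \<longleftrightarrow>
     (\<forall>u. 0 \<le> P u) \<and> (\<forall>u. P u \<noteq> 0 \<longrightarrow> u \<in> L) \<and>
     (\<forall>m. (\<Sum>u | length u = m. P u) = T) \<and>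
     (\<forall>m w. w \<noteq> [] \<longrightarrow> length w \<le> m \<longrightarrow>
        (\<Sum>u | length u = m. P u * occ w u) = (real m - length w + 1) * P w)"

lemma finite_lists_length: "finite {u :: 'a::finite list. length u = m}"
  using finite_lists_length_eq[of "UNIV :: 'a set" m] by simp

lemma word_frequencies_nonneg: "word_frequencies L T P \<Longrightarrow> 0 \<le> P u"
  unfolding word_frequencies_def by blast

lemma word_frequencies_language: "word_frequencies L T P \<Longrightarrow> P u \<noteq> 0 \<Longrightarrow> u \<in> L"
  unfolding word_frequencies_def by blast

lemma word_frequencies_mass: "word_frequencies L T P \<Longrightarrow> (\<Sum>u | length u = m. P u) = T"
  unfolding word_frequencies_def by blast

lemma word_frequencies_occ:
  "word_frequencies L T P \<Longrightarrow> w \<noteq> [] \<Longrightarrow> length w \<le> m \<Longrightarrow>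
    (\<Sum>u | length u = m. P u * occ w u) = (real m - length w + 1) * P w"
  unfolding word_frequencies_def by blast

lemma word_frequencies_sum_language:
  assumes "word_frequencies L T P"
  shows "(\<Sum>u | length u = m. P u * f u) = (\<Sum>u \<in> {u :: 'a::finite list. length u = m} \<inter> L. P u * f u)"
  using word_frequencies_language[OF assms]
  by (intro sum.mono_neutral_right finite_lists_length) auto

lemma word_frequencies_mass_language:
  assumes "word_frequencies L T P"
  shows "(\<Sum>u \<in> {u :: 'a::finite list. length u = m} \<inter> L. P u) = T"
  using word_frequencies_sum_language[OF assms, where m = m and f = "\<lambda>_. 1"]
    word_frequencies_mass[OF assms, of m] by simp

lemma word_frequencies_occ_language:
  assumes "word_frequencies L T P" "w \<noteq> []" "length w \<le> m"
  shows "(\<Sum>u \<in> {u :: 'a::finite list. length u = m} \<inter> L. P u * occ w u) = (real m - length w + 1) * P w"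
  using word_frequencies_sum_language[OF assms(1), where m = m and f = "\<lambda>u. real (occ w u)"]
    word_frequencies_occ[OF assms] by simp

lemma word_frequencies_window_diff_le:
  fixes \<tau> :: "'a::finite \<Rightarrow> 'a list" and P Q :: "'a list \<Rightarrow> real" and B :: real
  assumes P: "word_frequencies L T P" and Q: "word_frequencies L T Q"
    and letters: "\<And>a. P [a] = Q [a]"
    and w: "w \<noteq> []" "length w \<le> m"
    and decomp: "\<And>u. u \<in> L \<Longrightarrow> length u = m \<Longrightarrow>
      \<exists>s p. u = s @ concat (map \<tau> (V u)) @ p \<and> length s + length p \<le> e"
    and Lmin: "0 < Lmin" "\<And>b. Lmin \<le> length (\<tau> b)"
    and B: "\<And>x b. \<forall>a. \<bar>(incidence \<tau> *v x) $ a\<bar> \<le> e * (2 * T) \<Longrightarrow> \<bar>x $ b\<bar> \<le> B"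
  shows "(real m - length w + 1) * (P w - Q w)
    \<le> (\<Sum>b\<in>UNIV. occ w (\<tau> b) * B) + T * (length w * (m / Lmin) + e + 2 * length w)"
proof -
  define G where "G = {u :: 'a list. length u = m} \<inter> L"
  have "finite G" unfolding G_def using finite_lists_length by blast
  have V: "\<exists>s p. u = s @ concat (map \<tau> (V u)) @ p \<and> length s + length p \<le> e" if "u \<in> G" for u
    using decomp that unfolding G_def by blast
  have short: "real (length (V u)) \<le> m / Lmin" if uG: "u \<in> G" for u
  proof -
    obtain s p where sp: "u = s @ concat (map \<tau> (V u)) @ p" using V[OF uG] by blast
    have "real (length (V u)) \<le> length (s @ concat (map \<tau> (V u)) @ p) / Lmin"
      by (rule length_le_div_length_concat_map[OF Lmin])
    also have "\<dots> = m / Lmin"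
      using uG unfolding sp[symmetric] G_def by simp
    finally show ?thesis .
  qed
  have nonneg: "0 \<le> P u" "0 \<le> Q u" for u
    by (simp_all add: word_frequencies_nonneg[OF P] word_frequencies_nonneg[OF Q])
  have mass: "(\<Sum>u\<in>G. P u) = T" "(\<Sum>u\<in>G. Q u) = T"
    unfolding G_def by (simp_all add: word_frequencies_mass_language[OF P] word_frequencies_mass_language[OF Q])
  have "1 \<le> m" using w by (cases w) auto
  then have balanced: "(\<Sum>u\<in>G. (P u - Q u) * count_list u a) = 0" for a
    using word_frequencies_occ_language[OF P, of "[a]" m] word_frequencies_occ_language[OF Q, of "[a]" m]
      letters[of a]
    unfolding G_def by (simp add: occ_singleton left_diff_distrib sum_subtractf)
  define D where "D = (\<chi> b. \<Sum>u\<in>G. (P u - Q u) * count_list (V u) b)"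
  have "(\<Sum>u\<in>G. \<bar>P u - Q u\<bar>) \<le> 2 * T"
    using mass nonneg sum_mono[of G "\<lambda>u. \<bar>P u - Q u\<bar>" "\<lambda>u. P u + Q u"]
    by (simp add: sum.distrib abs_le_iff)
  then have image_bound: "\<bar>(incidence \<tau> *v D) $ a\<bar> \<le> e * (2 * T)" for a
  proof -
    have "\<bar>(incidence \<tau> *v D) $ a\<bar> \<le> e * (\<Sum>u\<in>G. \<bar>P u - Q u\<bar>)"
      unfolding D_def by (rule incidence_parikh_sum_le[OF \<open>finite G\<close> V balanced])
    also have "\<dots> \<le> e * (2 * T)"
      using \<open>(\<Sum>u\<in>G. \<bar>P u - Q u\<bar>) \<le> 2 * T\<close> by (rule mult_left_mono) simp
    finally show ?thesis .
  qed
  have "\<bar>D $ b\<bar> \<le> B" for b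
    using image_bound by (intro B allI)
  then have D_bound: "D $ b \<le> B" for b
    by (meson abs_le_D1)
  have "(real m - length w + 1) * (P w - Q w) = (\<Sum>u\<in>G. (P u - Q u) * occ w u)"
    using word_frequencies_occ_language[OF P w] word_frequencies_occ_language[OF Q w]
    unfolding G_def by (simp add: left_diff_distrib right_diff_distrib sum_subtractf)
  also have "\<dots> \<le> (\<Sum>b\<in>UNIV. occ w (\<tau> b) * D $ b)
      + (\<Sum>u\<in>G. P u) * (length w * (m / Lmin) + e + 2 * length w)"
    unfolding D_def using occ_weighted_difference_le[OF \<open>finite G\<close> nonneg V short] by simp
  also have "\<dots> \<le> (\<Sum>b\<in>UNIV. occ w (\<tau> b) * B) + T * (length w * (m / Lmin) + e + 2 * length w)"
    using D_bound mass by (auto intro!: sum_mono mult_left_mono)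
  finally show ?thesis .
qed

lemma word_frequencies_diff_le:
  fixes sig :: "nat \<Rightarrow> 'a::finite \<Rightarrow> 'a list"
  assumes inv: "\<And>n. invertible (incidence (sig n))"
    and P: "word_frequencies (dir_language sig) T P"
    and Q: "word_frequencies (dir_language sig) T Q"
    and letters: "\<And>a. P [a] = Q [a]"
    and "w \<noteq> []"
    and Lmin: "0 < Lmin" "\<And>b. Lmin \<le> length (comp_dir sig n [b])"
  shows "P w - Q w \<le> T * length w / Lmin"
proof -
  define \<tau> where "\<tau> = (\<lambda>b. comp_dir sig n [b])"
  define Lmax where "Lmax = Max (range (\<lambda>b. length (\<tau> b)))"
  have "length (\<tau> b) \<le> Lmax" for b
    unfolding Lmax_def by (rule Max_ge) auto
  then obtain K V where decomp: "\<And>u. u \<in> dir_language sig \<Longrightarrow> K < length u \<Longrightarrow>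
      \<exists>s p. u = s @ concat (map \<tau> (V u)) @ p \<and> length s + length p \<le> 2 * Lmax"
    using dir_language_decomp[of sig n Lmax] unfolding \<tau>_def by blast
  have "invertible (incidence \<tau>)"
    unfolding \<tau>_def by (rule invertible_incidence_comp_dir[of sig n, OF inv])
  then obtain B where B: "\<And>x b. \<forall>a. \<bar>(incidence \<tau> *v x) $ a\<bar> \<le> real (2 * Lmax) * (2 * T) \<Longrightarrow> \<bar>x $ b\<bar> \<le> B"
    using invertible_bounded_preimage[where c = "real (2 * Lmax) * (2 * T)"] by blast
  define C where "C = (\<Sum>b\<in>UNIV. occ w (\<tau> b) * B) + T * (2 * Lmax + 2 * length w)"
  have "(real m - length w + 1) * (P w - Q w) \<le> C + T * length w / Lmin * m"
    if m: "Suc (max K (length w)) \<le> m" for m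
  proof -
    have len: "length w \<le> m" using m by simp
    have dec: "\<exists>s p. u = s @ concat (map \<tau> (V u)) @ p \<and> length s + length p \<le> 2 * Lmax"
      if "u \<in> dir_language sig" "length u = m" for u
      using decomp[OF that(1)] that(2) m by simp
    have Lm: "Lmin \<le> length (\<tau> b)" for b
      unfolding \<tau>_def by (rule Lmin(2))
    from word_frequencies_window_diff_le[OF P Q letters \<open>w \<noteq> []\<close> len dec Lmin(1) Lm B]
    show ?thesis by (simp add: C_def algebra_simps)
  qed
  then show ?thesis
    by (rule le_of_affine_bound)
qed

theorem word_frequencies_eq:
  fixes sig :: "nat \<Rightarrow> 'a::finite \<Rightarrow> 'a list"
  assumes inv: "\<And>n. invertible (incidence (sig n))"
    and grow: "everywhere_growing sig"
    and P: "word_frequencies (dir_language sig) T P"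
    and Q: "word_frequencies (dir_language sig) T Q"
    and letters: "\<And>a. P [a] = Q [a]"
  shows "P = Q"
proof
  fix w
  show "P w = Q w"
  proof (cases "w = []")
    case True
    have "{u :: 'a list. length u = 0} = {[]}" by auto
    then show ?thesis
      using word_frequencies_mass[OF P, of 0] word_frequencies_mass[OF Q, of 0] True by simp
  next
    case False
    define L where "L = (\<lambda>n. Min (range (\<lambda>a. length (comp_dir sig n [a]))))"
    have L_le: "L n \<le> length (comp_dir sig n [b])" for n b
      unfolding L_def by (rule Min_le) auto
    have L_lim: "filterlim L at_top sequentially"
      using grow by (simp add: everywhere_growing_def L_def)
    have bound: "eventually (\<lambda>n. \<bar>P w - Q w\<bar> \<le> T * length w / L n) sequentially"
      using L_lim[unfolded filterlim_at_top, rule_format, of 1]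
    proof eventually_elim
      case (elim n)
      then show ?case
        using word_frequencies_diff_le[OF inv P Q letters False, of "L n" n]
          word_frequencies_diff_le[OF inv Q P letters[symmetric] False, of "L n" n] L_le
        by (simp add: abs_le_iff)
    qed
    have "(\<lambda>n. T * length w / L n) \<longlonglongrightarrow> 0"
      by (intro tendsto_divide_0[OF tendsto_const] filterlim_at_top_imp_at_infinity
          filterlim_compose[OF filterlim_real_sequentially L_lim])
    from this bound have "\<bar>P w - Q w\<bar> \<le> 0"
      by (rule tendsto_lowerbound) simp
    then show ?thesis by simp
  qed
qed

lemma prefix_iff_take: "prefix w v \<longleftrightarrow> take (length w) v = w"
proof
  assume "take (length w) v = w"
  then show "prefix w v" by (metis take_is_prefix)
qed (auto simp: prefix_def)

definition cylinder_at :: "int \<Rightarrow> 'a list \<Rightarrow> (int \<Rightarrow> 'a) set" where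
  "cylinder_at j w = {x. \<forall>i<length w. x (j + int i) = w ! i}"

lemma cylinder_eq_cylinder_at: "cylinder w = cylinder_at 1 w"
  by (simp add: cylinder_def cylinder_at_def add.commute)

lemma length_factor_at [simp]: "length (factor_at x j k) = k"
  by (simp add: factor_at_def)

lemma mem_cylinder_at_iff: "x \<in> cylinder_at j u \<longleftrightarrow> factor_at x j (length u) = u"
proof -
  have "factor_at x j (length u) = u \<longleftrightarrow> (\<forall>i<length u. x (j + int i) = u ! i)"
    unfolding factor_at_def list_eq_iff_nth_eq by simp
  then show ?thesis by (simp add: cylinder_at_def)
qed

lemma factor_at_in_cylinder_at:
  assumes "x \<in> cylinder_at j u" "i + k \<le> length u"
  shows "factor_at x (j + int i) k = take k (drop i u)"
proof (rule nth_equalityI)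
  fix t assume "t < length (factor_at x (j + int i) k)"
  then have "i + t < length u" using assms(2) by simp
  moreover have "\<forall>i<length u. x (j + int i) = u ! i"
    using assms(1) by (simp add: cylinder_at_def)
  ultimately have "x (j + int (i + t)) = u ! (i + t)"
    by blast
  then show "factor_at x (j + int i) k ! t = take k (drop i u) ! t"
    using \<open>t < _\<close> \<open>i + t < length u\<close> by (simp add: factor_at_def add.assoc)
qed (use assms(2) in simp)

lemma cylinder_at_Int_cylinder_at:
  assumes "i + length w \<le> length u"
  shows "cylinder_at j u \<inter> cylinder_at (j + int i) w = (if prefix w (drop i u) then cylinder_at j u else {})"
proof -
  have "x \<in> cylinder_at (j + int i) w \<longleftrightarrow> prefix w (drop i u)" if "x \<in> cylinder_at j u" for x
    using factor_at_in_cylinder_at[OF that assms] by (simp add: mem_cylinder_at_iff prefix_iff_take)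
  then show ?thesis by auto
qed

lemma cylinder_at_disjoint:
  "length u = length v \<Longrightarrow> u \<noteq> v \<Longrightarrow> cylinder_at j u \<inter> cylinder_at j v = {}"
  by (auto simp: mem_cylinder_at_iff)

lemma shift_vimage_cylinder_at: "shift -` cylinder_at j w = cylinder_at (j + 1) w"
  by (auto simp: shift_def cylinder_at_def ac_simps)

lemma mem_cylinder_at_factor_at:
  "y \<in> cylinder_at j (factor_at x j k) \<longleftrightarrow> (\<forall>t<k. y (j + int t) = x (j + int t))"
  by (simp add: cylinder_at_def factor_at_def)

definition central_cylinder :: "nat \<Rightarrow> (int \<Rightarrow> 'a) \<Rightarrow> (int \<Rightarrow> 'a) set" where
  "central_cylinder n x = {y. \<forall>i. \<bar>i\<bar> \<le> int n \<longrightarrow> y i = x i}"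

lemma central_cylinder_eq_cylinder_at:
  "central_cylinder n x = cylinder_at (- int n) (factor_at x (- int n) (2 * n + 1))"
proof -
  have "(\<forall>i. \<bar>i\<bar> \<le> int n \<longrightarrow> y i = x i) \<longleftrightarrow> (\<forall>t < 2 * n + 1. y (- int n + int t) = x (- int n + int t))"
    for y :: "int \<Rightarrow> 'a"
  proof (intro iffI allI impI)
    fix i assume agree: "\<forall>t < 2 * n + 1. y (- int n + int t) = x (- int n + int t)" and "\<bar>i\<bar> \<le> int n"
    then have "nat (i + int n) < 2 * n + 1" "- int n + int (nat (i + int n)) = i" by auto
    with agree show "y i = x i" by metis
  qed auto
  then show ?thesis
    by (auto simp: central_cylinder_def mem_cylinder_at_factor_at)
qed

lemma central_cylinder_Int:
  assumes "n \<le> n'"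
  shows "central_cylinder n x \<inter> central_cylinder n' x'
    = (if x' \<in> central_cylinder n x then central_cylinder n' x' else {})"
proof (cases "x' \<in> central_cylinder n x")
  case True
  with assms have "central_cylinder n' x' \<subseteq> central_cylinder n x"
    by (auto simp: central_cylinder_def)
  with True show ?thesis by auto
next
  case False
  then obtain i where "\<bar>i\<bar> \<le> int n" "x' i \<noteq> x i"
    by (auto simp: central_cylinder_def)
  with assms False show ?thesis
    by (auto simp: central_cylinder_def)
qed

text \<open>Unlike the family of all cylinders \<open>cylinder_at j u\<close>, the central ones are
  \<open>\<inter>\<close>-stable: two of them are nested or disjoint.\<close>
definition central_cylinders :: "(int \<Rightarrow> 'a) set set" where
  "central_cylinders = insert {} (range (\<lambda>(n, x). central_cylinder n x))"

lemma Int_stable_central_cylinders: "Int_stable central_cylinders"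
proof (rule Int_stableI)
  fix A B :: "(int \<Rightarrow> 'a) set"
  assume "A \<in> central_cylinders" "B \<in> central_cylinders"
  then consider "A = {} \<or> B = {}" | n x n' x' where "A = central_cylinder n x" "B = central_cylinder n' x'"
    by (auto simp: central_cylinders_def)
  then show "A \<inter> B \<in> central_cylinders"
  proof cases
    case 2
    then show ?thesis
      using central_cylinder_Int[of n n' x x'] central_cylinder_Int[of n' n x' x]
      by (cases "n \<le> n'") (auto simp: central_cylinders_def Int_commute)
  qed (auto simp: central_cylinders_def)
qed

lemma topspace_fullshift_top: "topspace fullshift_top = UNIV"
  by (simp add: fullshift_top_def PiE_UNIV_domain)

lemma space_fullshift_borel: "space fullshift_borel = UNIV"
  unfolding fullshift_borel_def topspace_fullshift_top
  by (rule space_measure_of) simp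

lemma sets_fullshift_borel: "sets fullshift_borel = sigma_sets UNIV {S. openin fullshift_top S}"
  unfolding fullshift_borel_def topspace_fullshift_top
  by (rule sets_measure_of) simp

lemma UNIV_in_fullshift_borel: "UNIV \<in> sets fullshift_borel"
  using sets.top[of fullshift_borel] unfolding space_fullshift_borel .

lemma coordinate_in_sets: "{x. x i = c} \<in> sets fullshift_borel"
proof -
  have "openin fullshift_top {x \<in> topspace fullshift_top. x i \<in> {c}}"
    unfolding fullshift_top_def
    by (rule openin_continuous_map_preimage[OF continuous_map_product_projection]) auto
  then show ?thesis
    unfolding sets_fullshift_borel topspace_fullshift_top by (intro sigma_sets.Basic) simp
qed

lemma cylinder_at_in_sets: "cylinder_at j w \<in> sets fullshift_borel"
proof -
  have "cylinder_at j w = (\<Inter>i\<in>{..<length w}. {x. x (j + int i) = w ! i})"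
    by (auto simp: cylinder_at_def)
  also have "\<dots> \<in> sets fullshift_borel"
    by (intro sets.countable_INT'' UNIV_in_fullshift_borel coordinate_in_sets) auto
  finally show ?thesis .
qed

lemma open_imp_central_cylinder_subset:
  assumes "openin fullshift_top S" "x \<in> S"
  obtains n where "central_cylinder n x \<subseteq> S"
proof -
  obtain U where U: "finite {i. U i \<noteq> UNIV}" "x \<in> Pi\<^sub>E UNIV U" "Pi\<^sub>E UNIV U \<subseteq> S"
    using assms unfolding fullshift_top_def openin_product_topology_alt by auto
  define n where "n = (\<Sum>i | U i \<noteq> UNIV. nat \<bar>i\<bar>)"
  have "\<bar>i\<bar> \<le> int n" if "U i \<noteq> UNIV" for i
  proof -
    have "nat \<bar>i\<bar> \<le> n"
      unfolding n_def by (rule member_le_sum) (use that U(1) in auto)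
    then show ?thesis by (simp add: nat_le_iff)
  qed
  then have "central_cylinder n x \<subseteq> Pi\<^sub>E UNIV U"
    using U(2) by (force simp: central_cylinder_def PiE_UNIV_domain)
  with U(3) show ?thesis using that by blast
qed

lemma countable_central_cylinders: "countable (central_cylinders :: (int \<Rightarrow> 'a::countable) set set)"
proof -
  have "central_cylinder n x \<in> range (\<lambda>(j, u). cylinder_at j u)" for n and x :: "int \<Rightarrow> 'a"
    unfolding central_cylinder_eq_cylinder_at
    by (rule range_eqI[where x = "(- int n, factor_at x (- int n) (2 * n + 1))"]) simp
  then have "range (\<lambda>(n, x). central_cylinder n x) \<subseteq> range (\<lambda>(j, u). cylinder_at j u :: (int \<Rightarrow> 'a) set)"
    by (intro image_subsetI) (simp add: case_prod_unfold)
  then have "central_cylinders \<subseteq> insert {} (range (\<lambda>(j, u). cylinder_at j u :: (int \<Rightarrow> 'a) set))"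
    unfolding central_cylinders_def by (rule insert_mono)
  moreover have "countable (insert {} (range (\<lambda>(j, u). cylinder_at j u :: (int \<Rightarrow> 'a) set)))"
    by (intro countable_insert countable_image countableI_type)
  ultimately show ?thesis
    by (rule countable_subset)
qed

lemma open_eq_Union_central_cylinders:
  assumes "openin fullshift_top S"
  shows "S = \<Union>{C \<in> central_cylinders. C \<subseteq> S}"
proof
  show "S \<subseteq> \<Union>{C \<in> central_cylinders. C \<subseteq> S}"
  proof
    fix x assume "x \<in> S"
    then obtain n where "central_cylinder n x \<subseteq> S"
      using open_imp_central_cylinder_subset assms by blast
    moreover have "x \<in> central_cylinder n x" by (simp add: central_cylinder_def)
    moreover have "central_cylinder n x \<in> central_cylinders"
      unfolding central_cylinders_def by (intro insertI2 range_eqI[where x = "(n, x)"]) simp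
    ultimately show "x \<in> \<Union>{C \<in> central_cylinders. C \<subseteq> S}"
      by blast
  qed
qed auto

lemma sets_fullshift_borel_central_cylinders:
  "sets (fullshift_borel :: (int \<Rightarrow> 'a::countable) measure) = sigma_sets UNIV central_cylinders"
proof
  have "central_cylinders \<subseteq> sets (fullshift_borel :: (int \<Rightarrow> 'a) measure)"
    by (auto simp: central_cylinders_def central_cylinder_eq_cylinder_at cylinder_at_in_sets)
  from sets.sigma_sets_subset[OF this]
  show "sigma_sets UNIV central_cylinders \<subseteq> sets (fullshift_borel :: (int \<Rightarrow> 'a) measure)"
    unfolding space_fullshift_borel .
next
  interpret S: sigma_algebra "UNIV :: (int \<Rightarrow> 'a) set" "sigma_sets UNIV central_cylinders"
    by (rule sigma_algebra_sigma_sets) auto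
  show "sets (fullshift_borel :: (int \<Rightarrow> 'a) measure) \<subseteq> sigma_sets UNIV central_cylinders"
    unfolding sets_fullshift_borel
  proof (rule S.sigma_sets_subset, rule subsetI, unfold mem_Collect_eq)
    fix S :: "(int \<Rightarrow> 'a) set"
    assume "openin fullshift_top S"
    then have "S = \<Union>{C \<in> central_cylinders. C \<subseteq> S}"
      by (rule open_eq_Union_central_cylinders)
    also have "\<dots> \<in> sigma_sets UNIV central_cylinders"
      using countable_central_cylinders by (intro S.countable_Union countable_Collect) auto
    finally show "S \<in> sigma_sets UNIV central_cylinders" .
  qed
qed

lemma generated_subshift_eq:
  "generated_subshift sig
    = (\<Inter>(i, k) \<in> UNIV. \<Union>u \<in> {u. length u = k} \<inter> dir_language sig. cylinder_at i u)"
  by (auto simp: generated_subshift_def dir_language_def mem_cylinder_at_iff)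

lemma generated_subshift_in_sets:
  "generated_subshift (sig :: nat \<Rightarrow> 'a::countable \<Rightarrow> 'a list) \<in> sets fullshift_borel"
proof -
  have "(\<Union>u \<in> U. cylinder_at i u) \<in> sets fullshift_borel" for i and U :: "'a list set"
    by (intro sets.countable_UN'' countableI_type cylinder_at_in_sets)
  then show ?thesis
    unfolding generated_subshift_eq
    by (intro sets.countable_INT'' UNIV_in_fullshift_borel countableI_type) auto
qed

context
  fixes M :: "(int \<Rightarrow> 'a::finite) measure" and X
  assumes M: "invariant_measure_on X M"
begin

lemma sets_invariant_measure: "sets M = sets fullshift_borel"
  using M by (simp add: invariant_measure_on_def)

lemma space_invariant_measure: "space M = UNIV"
  using sets_eq_imp_space_eq[OF sets_invariant_measure] space_fullshift_borel by simp

lemma finite_invariant_measure: "finite_measure M"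
  using M by (simp add: invariant_measure_on_def)

lemma cylinder_at_in_invariant_measure: "cylinder_at j w \<in> sets M"
  using sets_invariant_measure cylinder_at_in_sets by blast

lemma measure_cylinder_at: "measure M (cylinder_at j w) = measure M (cylinder w)"
proof -
  have step: "measure M (cylinder_at (j + 1) w) = measure M (cylinder_at j w)" for j
  proof -
    have "emeasure M (shift -` cylinder_at j w \<inter> space M) = emeasure M (cylinder_at j w)"
      using M cylinder_at_in_invariant_measure unfolding invariant_measure_on_def by blast
    then show ?thesis
      by (simp add: shift_vimage_cylinder_at space_invariant_measure measure_def)
  qed
  have "measure M (cylinder_at j w) = measure M (cylinder_at 1 w)"
  proof (induction j rule: int_induct[where k = 1])
    case (step1 i)
    then show ?case using step[of i] by simp
  next
    case (step2 i)
    then show ?case using step[of "i - 1"] by simp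
  qed simp
  then show ?thesis by (simp add: cylinder_eq_cylinder_at)
qed

lemma measure_central_cylinder:
  "measure M (central_cylinder n x) = measure M (cylinder (factor_at x (- int n) (2 * n + 1)))"
  by (simp add: central_cylinder_eq_cylinder_at measure_cylinder_at)

lemma sum_measure_cylinder_at_Int:
  assumes "A \<in> sets M"
  shows "(\<Sum>u | length u = m. measure M (cylinder_at j u \<inter> A)) = measure M A"
proof -
  interpret finite_measure M by (rule finite_invariant_measure)
  have "A = (\<Union>u \<in> {u. length u = m}. cylinder_at j u \<inter> A)"
    by (auto simp: mem_cylinder_at_iff)
  moreover have "measure M (\<Union>u \<in> {u. length u = m}. cylinder_at j u \<inter> A)
      = (\<Sum>u | length u = m. measure M (cylinder_at j u \<inter> A))"
    using assms cylinder_at_disjoint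
    by (intro measure_finite_Union finite_lists_length)
      (auto simp: disjoint_family_on_def cylinder_at_in_invariant_measure)
  ultimately show ?thesis by simp
qed

lemma sum_measure_cylinders: "(\<Sum>u | length u = m. measure M (cylinder u)) = measure M UNIV"
  using sum_measure_cylinder_at_Int[where A = UNIV and m = m and j = 1] sets.top[of M]
  by (simp add: space_invariant_measure cylinder_eq_cylinder_at)

lemma sum_measure_letter_cylinders: "(\<Sum>a\<in>UNIV. measure M (cylinder [a])) = measure M UNIV"
proof -
  have "{u :: 'a list. length u = 1} = range (\<lambda>a. [a])"
    by (auto simp: length_Suc_conv)
  then show ?thesis
    using sum_measure_cylinders[of 1] by (simp add: sum.reindex inj_on_def)
qed

text \<open>Counting by positions: the windows \<open>u\<close> of length \<open>m\<close> with \<open>w\<close> at position \<open>i\<close> partition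
  a shifted copy of \<open>[w]\<close>.\<close>
lemma sum_measure_cylinders_occ:
  assumes "w \<noteq> []" "length w \<le> m"
  shows "(\<Sum>u | length u = m. measure M (cylinder u) * occ w u)
    = (real m - length w + 1) * measure M (cylinder w)"
proof -
  have window: "(\<Sum>u | length u = m. if prefix w (drop i u) then measure M (cylinder u) else 0)
      = measure M (cylinder w)" if "i + length w \<le> m" for i
  proof -
    have "(\<Sum>u | length u = m. if prefix w (drop i u) then measure M (cylinder u) else 0)
        = (\<Sum>u | length u = m. measure M (cylinder_at 1 u \<inter> cylinder_at (1 + int i) w))"
      using that by (intro sum.cong) (auto simp: cylinder_at_Int_cylinder_at cylinder_eq_cylinder_at)
    also have "\<dots> = measure M (cylinder w)"
      by (simp add: sum_measure_cylinder_at_Int cylinder_at_in_invariant_measure measure_cylinder_at)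
    finally show ?thesis .
  qed
  have no_window: "\<not> prefix w (drop i u)" if "m < i + length w" "length u = m" for i u
  proof
    assume "prefix w (drop i u)"
    then have "length w \<le> m - i"
      using prefix_length_le that(2) by fastforce
    moreover have "0 < length w" using assms(1) by simp
    ultimately show False using that(1) by arith
  qed
  have "(\<Sum>u | length u = m. measure M (cylinder u) * occ w u)
      = (\<Sum>i<m. \<Sum>u | length u = m. if prefix w (drop i u) then measure M (cylinder u) else 0)"
    by (subst sum.swap) (auto simp: occ_conv_sum sum_distrib_left of_nat_sum intro!: sum.cong)
  also have "\<dots> = (\<Sum>i<m. if i + length w \<le> m then measure M (cylinder w) else 0)"
    using window no_window by (intro sum.cong) auto
  also have "\<dots> = real (card {i. i < m \<and> i + length w \<le> m}) * measure M (cylinder w)"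
    by (simp add: sum.If_cases Int_def)
  also have "{i. i < m \<and> i + length w \<le> m} = {..m - length w}"
    using assms by (cases w) auto
  finally show ?thesis using assms(2) by (simp add: of_nat_diff)
qed

end

lemma invariant_measure_cylinder_in_language:
  fixes sig :: "nat \<Rightarrow> 'a::finite \<Rightarrow> 'a list"
  assumes M: "invariant_measure_on (generated_subshift sig) M"
    and "measure M (cylinder u) \<noteq> 0"
  shows "u \<in> dir_language sig"
proof (rule ccontr)
  assume u: "u \<notin> dir_language sig"
  have "x \<notin> generated_subshift sig" if "x \<in> cylinder u" for x
  proof
    assume "x \<in> generated_subshift sig"
    then have "factor_at x 1 (length u) \<in> dir_language sig"
      by (simp add: generated_subshift_def dir_language_def)
    moreover have "factor_at x 1 (length u) = u"
      using that by (simp add: cylinder_eq_cylinder_at mem_cylinder_at_iff)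
    ultimately show False using u by simp
  qed
  then have "cylinder u \<subseteq> space M - generated_subshift sig"
    by (auto simp: space_invariant_measure[OF M])
  moreover have "space M - generated_subshift sig \<in> sets M"
    using generated_subshift_in_sets[of sig] sets_invariant_measure[OF M] by auto
  ultimately have "emeasure M (cylinder u) \<le> emeasure M (space M - generated_subshift sig)"
    by (rule emeasure_mono)
  then have "emeasure M (cylinder u) = 0"
    using M by (simp add: invariant_measure_on_def)
  with assms(2) show False by (simp add: measure_def)
qed

lemma invariant_measure_word_frequencies:
  fixes sig :: "nat \<Rightarrow> 'a::finite \<Rightarrow> 'a list"
  assumes "invariant_measure_on (generated_subshift sig) M"
  shows "word_frequencies (dir_language sig) (measure M UNIV) (\<lambda>u. measure M (cylinder u))"
  using invariant_measure_cylinder_in_language[OF assms] sum_measure_cylinders[OF assms]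
    sum_measure_cylinders_occ[OF assms]
  by (simp add: word_frequencies_def)

lemma invariant_measures_eqI:
  fixes M N :: "(int \<Rightarrow> 'a::finite) measure"
  assumes M: "invariant_measure_on X M" and N: "invariant_measure_on Y N"
    and cylinders: "\<And>u. measure M (cylinder u) = measure N (cylinder u)"
  shows "M = N"
proof (rule measure_eqI_generator_eq_countable[OF Int_stable_central_cylinders])
  interpret M: finite_measure M by (rule finite_invariant_measure[OF M])
  interpret N: finite_measure N by (rule finite_invariant_measure[OF N])
  show "emeasure M C = emeasure N C" if "C \<in> central_cylinders" for C
  proof -
    from that consider "C = {}" | n x where "C = central_cylinder n x"
      by (auto simp: central_cylinders_def)
    then show ?thesis
    proof cases
      case 2
      then show ?thesis
        using cylinders by (simp add: M.emeasure_eq_measure N.emeasure_eq_measure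
            measure_central_cylinder[OF M] measure_central_cylinder[OF N])
    qed simp
  qed
  show "sets M = sigma_sets UNIV central_cylinders" "sets N = sigma_sets UNIV central_cylinders"
    by (simp_all add: sets_invariant_measure[OF M] sets_invariant_measure[OF N]
        sets_fullshift_borel_central_cylinders)
  have "central_cylinder 0 (\<lambda>_. a) \<in> central_cylinders" for a :: 'a
    unfolding central_cylinders_def by (intro insertI2 range_eqI[where x = "(0, \<lambda>_. a)"]) simp
  then show "range (\<lambda>a :: 'a. central_cylinder 0 (\<lambda>_. a)) \<subseteq> central_cylinders"
    by blast
  have "x \<in> central_cylinder 0 (\<lambda>_. x 0)" for x :: "int \<Rightarrow> 'a"
    by (simp add: central_cylinder_def)
  then show "\<Union> (range (\<lambda>a :: 'a. central_cylinder 0 (\<lambda>_. a))) = UNIV"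
    by blast
  show "countable (range (\<lambda>a. central_cylinder 0 (\<lambda>_. a :: 'a)))"
    by (intro countable_finite finite_imageI) simp
  show "emeasure M C \<noteq> \<infinity>" for C
    by (simp add: M.emeasure_eq_measure)
qed simp

theorem corollary2:
  fixes sig :: "nat \<Rightarrow> 'a::finite \<Rightarrow> 'a list"
    and M N :: "(int \<Rightarrow> 'a) measure"
  assumes inv: "\<And>n. invertible (incidence (sig n))"
    and grow: "everywhere_growing sig"
    and M: "invariant_measure_on (generated_subshift sig) M"
    and N: "invariant_measure_on (generated_subshift sig) N"
    and agree: "\<And>a. emeasure M (cylinder [a]) = emeasure N (cylinder [a])"
  shows "M = N"
proof -
  have letters: "measure M (cylinder [a]) = measure N (cylinder [a])" for a
    using agree[of a] by (simp add: measure_def)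
  have mass: "measure M UNIV = measure N UNIV"
    using sum_measure_letter_cylinders[OF M] sum_measure_letter_cylinders[OF N] letters by simp
  have "(\<lambda>u. measure M (cylinder u)) = (\<lambda>u. measure N (cylinder u))"
  proof (rule word_frequencies_eq[where sig = sig, OF inv grow])
    show "word_frequencies (dir_language sig) (measure M UNIV) (\<lambda>u. measure M (cylinder u))"
      using M by (rule invariant_measure_word_frequencies)
    show "word_frequencies (dir_language sig) (measure M UNIV) (\<lambda>u. measure N (cylinder u))"
      unfolding mass using N by (rule invariant_measure_word_frequencies)
  qed (rule letters)
  then show ?thesis
    by (intro invariant_measures_eqI[OF M N]) (rule fun_cong)
qed

end
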